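(* Let $X$ be a $T_1$ space and $\mathcal{P}$ an ideal of closed subsets of $X$ such that $X$ is $\tau\mathcal{P}$-pseudocompact. Then $C(X)_\mathcal{P}$ is closed under uniform limits if and only if $C^*(X)_\mathcal{P}$, equipped with the norm $\|f\|=\sup\{|f(x)|\colon x\in X\}$, is a Banach space.
   Context: An ideal of closed subsets of $X$ is a family $\mathcal{P}$ of closed subsets closed under finite unions and under passing to closed subsets. $D_f$ is the set of discontinuity points of $f\in\mathbb{R}^X$; $C(X)_\mathcal{P}=\{f\in\mathbb{R}^X\colon \overline{D_f}\in\mathcal{P}\}$ and $C^*(X)_\mathcal{P}$ is the set of its bounded members. $X$ is $\tau\mathcal{P}$-pseudocompact if $C(X)_\mathcal{P}=C^*(X)_\mathcal{P}$. $C(X)_\mathcal{P}$ is closed under uniform limits if whenever a sequence in $C(X)_\mathcal{P}$ converges uniformly on $X$ to $f\in\mathbb{R}^X$, then $f\in C(X)_\mathcal{P}$. *)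

theory Defs
  imports "HOL-Analysis.Analysis"
begin

text \<open>The space X is the whole type 'a (a topological space via type class).\<close>

definition closed_ideal :: "'a::topological_space set set \<Rightarrow> bool" where
  "closed_ideal P \<longleftrightarrow> P \<noteq> {} \<and> (\<forall>A\<in>P. closed A)
     \<and> (\<forall>A\<in>P. \<forall>B\<in>P. A \<union> B \<in> P)
     \<and> (\<forall>A\<in>P. \<forall>B. closed B \<and> B \<subseteq> A \<longrightarrow> B \<in> P)"

definition discont_points :: "('a::topological_space \<Rightarrow> real) \<Rightarrow> 'a set" where
  "discont_points f = {x. \<not> (f \<longlongrightarrow> f x) (at x)}"

definition CP :: "'a::topological_space set set \<Rightarrow> ('a \<Rightarrow> real) set" where
  "CP P = {f. closure (discont_points f) \<in> P}"

definition CPstar :: "'a::topological_space set set \<Rightarrow> ('a \<Rightarrow> real) set" where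
  "CPstar P = {f \<in> CP P. bounded (range f)}"

definition tauP_pseudocompact :: "'a::topological_space set set \<Rightarrow> bool" where
  "tauP_pseudocompact P \<longleftrightarrow> CP P = CPstar P"

definition closed_under_uniform_limits :: "('a \<Rightarrow> real) set \<Rightarrow> bool" where
  "closed_under_uniform_limits S \<longleftrightarrow>
     (\<forall>fs f. (\<forall>n. fs n \<in> S) \<and> uniform_limit UNIV fs f sequentially \<longrightarrow> f \<in> S)"

definition sup_norm :: "('a \<Rightarrow> real) \<Rightarrow> real" where
  "sup_norm f = (SUP x. \<bar>f x\<bar>)"

definition banach_sup :: "('a \<Rightarrow> real) set \<Rightarrow> bool" where
  "banach_sup S \<longleftrightarrow>
     (\<lambda>x. 0) \<in> S
     \<and> (\<forall>f\<in>S. \<forall>g\<in>S. (\<lambda>x. f x + g x) \<in> S)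
     \<and> (\<forall>c::real. \<forall>f\<in>S. (\<lambda>x. c * f x) \<in> S)
     \<and> (\<forall>fs. (\<forall>n. fs n \<in> S) \<and>
          (\<forall>e>0. \<exists>N. \<forall>m\<ge>N. \<forall>n\<ge>N. sup_norm (\<lambda>x. fs m x - fs n x) < e)
        \<longrightarrow> (\<exists>g\<in>S. (\<lambda>n. sup_norm (\<lambda>x. fs n x - g x)) \<longlonglongrightarrow> 0))"

end

theory Submission
  imports Defs
begin

text \<open>
  \<open>\<tau>\<P>\<close>-pseudocompactness makes every member of \<open>C(X)\<^sub>\<P>\<close> bounded, so \<open>C\<^sup>*(X)\<^sub>\<P> = C(X)\<^sub>\<P>\<close>,
  and this is a linear space of functions because discontinuity sets of sums and scalar multiples
  are contained in the union of those of the summands. On bounded functions a sequence is Cauchy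
  (convergent) in the sup norm exactly when it is uniformly Cauchy (uniformly convergent). Since
  every uniformly Cauchy sequence of real functions has a uniform limit and uniform limits are
  unique, completeness in the sup norm says precisely that the space is closed under uniform
  limits.
\<close>

lemma sup_norm_le_iff:
  fixes h :: "'a \<Rightarrow> real"
  assumes "bounded (range h)"
  shows "sup_norm h \<le> B \<longleftrightarrow> (\<forall>x. \<bar>h x\<bar> \<le> B)"
proof -
  obtain C where "\<And>x. \<bar>h x\<bar> \<le> C" using assms by (auto simp: bounded_iff)
  then have "bdd_above (range (\<lambda>x. \<bar>h x\<bar>))" by (intro bdd_aboveI2)
  then show ?thesis unfolding sup_norm_def by (simp add: cSUP_le_iff)
qed

lemma abs_le_sup_norm:
  fixes h :: "'a \<Rightarrow> real"
  assumes "bounded (range h)"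
  shows "\<bar>h x\<bar> \<le> sup_norm h"
  using sup_norm_le_iff[OF assms] by blast

lemma sup_norm_nonneg:
  fixes h :: "'a \<Rightarrow> real"
  assumes "bounded (range h)"
  shows "0 \<le> sup_norm h"
  using abs_le_sup_norm[OF assms] abs_ge_zero order_trans by blast

lemma eventually_sup_norm_less_iff:
  fixes h :: "'i \<Rightarrow> 'a \<Rightarrow> real"
  assumes "\<And>i. bounded (range (h i))"
  shows "(\<forall>e>0. \<forall>\<^sub>F i in F. sup_norm (h i) < e)
           \<longleftrightarrow> (\<forall>e>0. \<forall>\<^sub>F i in F. \<forall>x. \<bar>h i x\<bar> < e)"
proof (intro iffI allI impI)
  fix e :: real
  assume "\<forall>e>0. \<forall>\<^sub>F i in F. sup_norm (h i) < e" and "e > 0"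
  then have "\<forall>\<^sub>F i in F. sup_norm (h i) < e" by blast
  then show "\<forall>\<^sub>F i in F. \<forall>x. \<bar>h i x\<bar> < e"
    by eventually_elim (meson abs_le_sup_norm[OF assms] le_less_trans)
next
  fix e :: real
  assume "\<forall>e>0. \<forall>\<^sub>F i in F. \<forall>x. \<bar>h i x\<bar> < e" and "e > 0"
  then have "\<forall>\<^sub>F i in F. \<forall>x. \<bar>h i x\<bar> < e / 2" using half_gt_zero by blast
  then show "\<forall>\<^sub>F i in F. sup_norm (h i) < e"
  proof eventually_elim
    case (elim i)
    then have "sup_norm (h i) \<le> e / 2"
      unfolding sup_norm_le_iff[OF assms] by (simp add: less_imp_le)
    with \<open>e > 0\<close> show ?case by linarith
  qed
qed

lemma sup_norm_Cauchy_iff_uniformly_Cauchy: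
  fixes fs :: "nat \<Rightarrow> 'a \<Rightarrow> real"
  assumes "\<And>n. bounded (range (fs n))"
  shows "(\<forall>e>0. \<exists>N. \<forall>m\<ge>N. \<forall>n\<ge>N. sup_norm (\<lambda>x. fs m x - fs n x) < e)
           \<longleftrightarrow> uniformly_Cauchy_on UNIV fs"
proof -
  have "uniformly_Cauchy_on UNIV fs
          \<longleftrightarrow> (\<forall>e>0. \<exists>N. \<forall>m\<ge>N. \<forall>n\<ge>N. \<forall>x. \<bar>fs m x - fs n x\<bar> < e)"
    unfolding uniformly_Cauchy_on_def dist_real_def by fast
  then show ?thesis
    using eventually_sup_norm_less_iff
        [of "\<lambda>(n, m) x. fs m x - fs n x" "sequentially \<times>\<^sub>F sequentially"]
    by (simp add: assms bounded_minus_comp split_beta eventually_prod_sequentially)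
qed

lemma sup_norm_tendsto_0_iff_uniform_limit:
  fixes fs :: "nat \<Rightarrow> 'a \<Rightarrow> real"
  assumes "\<And>n. bounded (range (\<lambda>x. fs n x - g x))"
  shows "(\<lambda>n. sup_norm (\<lambda>x. fs n x - g x)) \<longlonglongrightarrow> 0
           \<longleftrightarrow> uniform_limit UNIV fs g sequentially"
  using eventually_sup_norm_less_iff[of "\<lambda>n x. fs n x - g x" sequentially]
  by (simp add: assms sup_norm_nonneg tendsto_iff uniform_limit_iff dist_real_def)

lemma closed_under_uniform_limits_iff_uniformly_Cauchy:
  "closed_under_uniform_limits S \<longleftrightarrow>
     (\<forall>fs. (\<forall>n. fs n \<in> S) \<and> uniformly_Cauchy_on UNIV fs
        \<longrightarrow> (\<exists>g\<in>S. uniform_limit UNIV fs g sequentially))"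
proof (intro iffI allI impI)
  fix fs :: "nat \<Rightarrow> 'a \<Rightarrow> real"
  assume "closed_under_uniform_limits S"
    and fs: "(\<forall>n. fs n \<in> S) \<and> uniformly_Cauchy_on UNIV fs"
  moreover obtain g where "uniform_limit UNIV fs g sequentially"
    using fs Cauchy_uniformly_convergent uniformly_convergent_on_def by blast
  ultimately show "\<exists>g\<in>S. uniform_limit UNIV fs g sequentially"
    unfolding closed_under_uniform_limits_def by blast
next
  assume complete: "\<forall>fs. (\<forall>n. fs n \<in> S) \<and> uniformly_Cauchy_on UNIV fs
                      \<longrightarrow> (\<exists>g\<in>S. uniform_limit UNIV fs g sequentially)"
  show "closed_under_uniform_limits S"
    unfolding closed_under_uniform_limits_def
  proof (intro allI impI)
    fix fs f
    assume fs: "(\<forall>n. fs n \<in> S) \<and> uniform_limit UNIV fs f sequentially"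
    then have "uniformly_Cauchy_on UNIV fs"
      by (blast intro: uniformly_convergent_Cauchy uniformly_convergentI)
    with fs complete obtain g where "g \<in> S" and g: "uniform_limit UNIV fs g sequentially"
      by blast
    have "f = g"
    proof (rule ext, rule LIMSEQ_unique)
      fix x
      show "(\<lambda>n. fs n x) \<longlonglongrightarrow> f x"
        using fs by (intro tendsto_uniform_limitI[where S=UNIV]) simp_all
      show "(\<lambda>n. fs n x) \<longlonglongrightarrow> g x"
        using g by (intro tendsto_uniform_limitI[where S=UNIV]) simp_all
    qed
    with \<open>g \<in> S\<close> show "f \<in> S" by simp
  qed
qed

lemma banach_sup_iff_closed_under_uniform_limits:
  fixes S :: "('a \<Rightarrow> real) set"
  assumes bounded: "\<And>f. f \<in> S \<Longrightarrow> bounded (range f)"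
    and "(\<lambda>x. 0) \<in> S"
    and "\<And>f g. f \<in> S \<Longrightarrow> g \<in> S \<Longrightarrow> (\<lambda>x. f x + g x) \<in> S"
    and "\<And>c f. f \<in> S \<Longrightarrow> (\<lambda>x. c * f x) \<in> S"
  shows "banach_sup S \<longleftrightarrow> closed_under_uniform_limits S"
proof -
  have completeness_iff:
    "((\<forall>n. fs n \<in> S) \<and> (\<forall>e>0. \<exists>N. \<forall>m\<ge>N. \<forall>n\<ge>N. sup_norm (\<lambda>x. fs m x - fs n x) < e)
        \<longrightarrow> (\<exists>g\<in>S. (\<lambda>n. sup_norm (\<lambda>x. fs n x - g x)) \<longlonglongrightarrow> 0))
     \<longleftrightarrow> ((\<forall>n. fs n \<in> S) \<and> uniformly_Cauchy_on UNIV fs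
        \<longrightarrow> (\<exists>g\<in>S. uniform_limit UNIV fs g sequentially))" for fs
  proof (cases "\<forall>n. fs n \<in> S")
    case True
    have "(\<forall>e>0. \<exists>N. \<forall>m\<ge>N. \<forall>n\<ge>N. sup_norm (\<lambda>x. fs m x - fs n x) < e)
          \<longleftrightarrow> uniformly_Cauchy_on UNIV fs"
      using True bounded by (intro sup_norm_Cauchy_iff_uniformly_Cauchy) blast
    moreover have "(\<lambda>n. sup_norm (\<lambda>x. fs n x - g x)) \<longlonglongrightarrow> 0
          \<longleftrightarrow> uniform_limit UNIV fs g sequentially" if "g \<in> S" for g
      using True that
      by (intro sup_norm_tendsto_0_iff_uniform_limit bounded_minus_comp bounded) auto
    ultimately show ?thesis by blast
  qed blast
  show ?thesis
    unfolding banach_sup_def closed_under_uniform_limits_iff_uniformly_Cauchy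
      all_cong1[OF completeness_iff]
    by (simp add: assms(2-4))
qed

lemma closed_ideal_empty: "closed_ideal P \<Longrightarrow> {} \<in> P"
  unfolding closed_ideal_def by (metis closed_empty empty_subsetI ex_in_conv)

lemma closed_ideal_Un: "closed_ideal P \<Longrightarrow> A \<in> P \<Longrightarrow> B \<in> P \<Longrightarrow> A \<union> B \<in> P"
  unfolding closed_ideal_def by (elim conjE) fast

lemma closed_ideal_closed: "closed_ideal P \<Longrightarrow> A \<in> P \<Longrightarrow> closed A"
  unfolding closed_ideal_def by simp

lemma closed_ideal_closed_subset:
  "closed_ideal P \<Longrightarrow> A \<in> P \<Longrightarrow> closed B \<Longrightarrow> B \<subseteq> A \<Longrightarrow> B \<in> P"
  unfolding closed_ideal_def by (elim conjE) fast

lemma CP_if_discont_points_subset: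
  assumes "closed_ideal P" "A \<in> P" "discont_points f \<subseteq> A"
  shows "f \<in> CP P"
proof -
  have "closure (discont_points f) \<subseteq> A"
    using assms closed_ideal_closed by (intro closure_minimal)
  then show ?thesis
    unfolding CP_def using assms(1,2) by (simp add: closed_ideal_closed_subset)
qed

lemma discont_points_const [simp]: "discont_points (\<lambda>x. c) = {}"
  by (simp add: discont_points_def)

lemma discont_points_add:
  "discont_points (\<lambda>x. f x + g x) \<subseteq> discont_points f \<union> discont_points g"
  unfolding discont_points_def using tendsto_add by fastforce

lemma discont_points_mult_left: "discont_points (\<lambda>x. c * f x) \<subseteq> discont_points f"
  unfolding discont_points_def using tendsto_mult_left by fastforce

lemma CP_zero: "closed_ideal P \<Longrightarrow> (\<lambda>x. 0) \<in> CP P"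
  by (rule CP_if_discont_points_subset[OF _ closed_ideal_empty]) auto

lemma CP_add:
  assumes "closed_ideal P" "f \<in> CP P" "g \<in> CP P"
  shows "(\<lambda>x. f x + g x) \<in> CP P"
proof (rule CP_if_discont_points_subset[OF assms(1)])
  show "closure (discont_points f) \<union> closure (discont_points g) \<in> P"
    using assms by (simp add: CP_def closed_ideal_Un)
  show "discont_points (\<lambda>x. f x + g x)
          \<subseteq> closure (discont_points f) \<union> closure (discont_points g)"
    using discont_points_add closure_subset by blast
qed

lemma CP_mult_left:
  assumes "closed_ideal P" "f \<in> CP P"
  shows "(\<lambda>x. c * f x) \<in> CP P"
proof (rule CP_if_discont_points_subset[OF assms(1)])
  show "closure (discont_points f) \<in> P"
    using assms(2) by (simp add: CP_def)
  show "discont_points (\<lambda>x. c * f x) \<subseteq> closure (discont_points f)"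
    using discont_points_mult_left closure_subset by blast
qed

theorem theorem4p4:
  fixes P :: "'a::t1_space set set"
  assumes "closed_ideal P"
    and "tauP_pseudocompact P"
  shows "closed_under_uniform_limits (CP P) \<longleftrightarrow> banach_sup (CPstar P)"
proof -
  have CP_eq: "CPstar P = CP P"
    using assms(2) unfolding tauP_pseudocompact_def by simp
  have bounded: "bounded (range f)" if "f \<in> CP P" for f
    using that CP_eq unfolding CPstar_def by blast
  have "banach_sup (CP P) \<longleftrightarrow> closed_under_uniform_limits (CP P)"
    using assms(1)
    by (intro banach_sup_iff_closed_under_uniform_limits bounded CP_zero CP_add CP_mult_left)
  then show ?thesis
    unfolding CP_eq by (rule sym)
qed

end
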